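(* Let $\mathcal{A}=\{a_1<\dots<a_k\}$ be a finite ordered alphabet and let $T$ be an interval exchange transformation on $[\ell,r)$ over $\mathcal{A}$ with permutation $\pi\in S_{\mathcal{A}}$. Then every return word in the language of $T$ is $\pi$-clustering for $\mathcal{A}$; that is, for every $w\in\mathcal{L}(T)$ and every $u\in\mathcal{R}(w)$, the word $u$ is $\pi$-clustering for $\mathcal{A}$.
   Context: An interval is a left-closed right-open real interval. A $k$-IET $T$ on $I=[\ell,r)$ over $\mathcal{A}$ is given by a partition of $I$ into intervals $(I_a)_{a\in\mathcal{A}}$ of positive length, with $I_a$ to the left of $I_b$ whenever $a<b$, together with a permutation $\pi$ of $\mathcal{A}$; it is defined by $T(x)=x+\tau_a$ for $x\in I_a$, where $\tau_a=\sum_{b:\,\pi^{-1}(b)<\pi^{-1}(a)}|I_b|-\sum_{b<a}|I_b|$ (so the image intervals $T(I_{\pi(a_1)}),\dots,T(I_{\pi(a_k)})$ appear from left to right). No minimality or regularity is assumed. The trajectory of $x\in I$ is the infinite word $\Omega_T(x)=w_0w_1w_2\cdots$ with $w_i=a$ iff $T^i(x)\in I_a$. The language $\mathcal{L}(T)$ is the set of all finite factors of all trajectories $\Omega_T(x)$, $x\in I$. For $w\in\mathcal{L}(T)$, the set of (left) return words is $\mathcal{R}(w)=\{u\in\mathcal{A}^*: uw\in(\mathcal{L}(T)\cap w\mathcal{A}^* )\setminus \mathcal{A}^+w\mathcal{A}^+\}$. For a word $v$ of length $n$ over $\mathcal{A}$, its Burrows–Wheeler transform $\mathrm{bwt}_{\mathcal{A}}(v)$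 is the word formed by the last letters of the $n$ cyclic rotations (conjugates) of $v$, listed in lexicographic order with respect to the order of $\mathcal{A}$. A word $v$ is $\pi$-clustering for $\mathcal{A}$ if $\mathrm{bwt}_{\mathcal{A}}(v)=\pi(a_1)^{k_1}\pi(a_2)^{k_2}\cdots\pi(a_k)^{k_k}$ where $k_i=|v|_{\pi(a_i)}$ is the number of occurrences of $\pi(a_i)$ in $v$. *)

theory Defs
  imports Complex_Main "HOL-Library.List_Lexorder"
begin

text \<open>An IET is given by the left endpoint l, the lengths
  lam :: 'a => real (all positive) and a permutation perm of the alphabet.\<close>

definition iet_left :: "real \<Rightarrow> ('a::{linorder,finite} \<Rightarrow> real) \<Rightarrow> 'a \<Rightarrow> real" where
  "iet_left l lam a = l + (\<Sum>b\<in>{b. b < a}. lam b)"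

definition iet_interval :: "real \<Rightarrow> ('a::{linorder,finite} \<Rightarrow> real) \<Rightarrow> 'a \<Rightarrow> real set" where
  "iet_interval l lam a = {iet_left l lam a ..< iet_left l lam a + lam a}"

definition iet_domain :: "real \<Rightarrow> ('a::{linorder,finite} \<Rightarrow> real) \<Rightarrow> real set" where
  "iet_domain l lam = {l ..< l + (\<Sum>b\<in>UNIV. lam b)}"

definition iet_tau :: "('a::{linorder,finite} \<Rightarrow> real) \<Rightarrow> ('a \<Rightarrow> 'a) \<Rightarrow> 'a \<Rightarrow> real" where
  "iet_tau lam perm a = (\<Sum>b\<in>{b. inv perm b < inv perm a}. lam b) - (\<Sum>b\<in>{b. b < a}. lam b)"

definition iet_letter :: "real \<Rightarrow> ('a::{linorder,finite} \<Rightarrow> real) \<Rightarrow> real \<Rightarrow> 'a" where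
  "iet_letter l lam x = (THE a. x \<in> iet_interval l lam a)"

definition iet_map :: "real \<Rightarrow> ('a::{linorder,finite} \<Rightarrow> real) \<Rightarrow> ('a \<Rightarrow> 'a) \<Rightarrow> real \<Rightarrow> real" where
  "iet_map l lam perm x = x + iet_tau lam perm (iet_letter l lam x)"

definition iet_traj :: "real \<Rightarrow> ('a::{linorder,finite} \<Rightarrow> real) \<Rightarrow> ('a \<Rightarrow> 'a) \<Rightarrow> real \<Rightarrow> nat \<Rightarrow> 'a" where
  "iet_traj l lam perm x i = iet_letter l lam ((iet_map l lam perm ^^ i) x)"

definition iet_language :: "real \<Rightarrow> ('a::{linorder,finite} \<Rightarrow> real) \<Rightarrow> ('a \<Rightarrow> 'a) \<Rightarrow> 'a list set" where
  "iet_language l lam perm =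
     {w. \<exists>x\<in>iet_domain l lam. \<exists>i. w = map (iet_traj l lam perm x) [i..<i + length w]}"

definition return_words :: "'a list set \<Rightarrow> 'a list \<Rightarrow> 'a list set" where
  "return_words L w =
     {u. u @ w \<in> L \<and> (\<exists>s. u @ w = w @ s) \<and>
         \<not> (\<exists>p s. p \<noteq> [] \<and> s \<noteq> [] \<and> u @ w = p @ w @ s)}"

definition bwt :: "'a::linorder list \<Rightarrow> 'a list" where
  "bwt v = map last (sort (map (\<lambda>i. rotate i v) [0..<length v]))"

definition pi_clustering :: "('a::{linorder,finite} \<Rightarrow> 'a) \<Rightarrow> 'a list \<Rightarrow> bool" where
  "pi_clustering perm v \<longleftrightarrow>
     bwt v = concat (map (\<lambda>a. replicate (count_list v (perm a)) (perm a))
                         (sorted_list_of_set (UNIV :: 'a set)))"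

end

theory Submission
  imports Defs "HOL-Library.Multiset"
begin

text \<open>Two points whose trajectories agree on their first q letters are moved by the same
  translations, so their order is preserved up to time q; as the intervals I a are ordered like
  the letters, the smaller point reads the smaller letter at the first position where the
  trajectories differ. Read u w along the orbit z, T z, T^2 z, ... of a point z. The rotation of
  u that starts after its k-th letter is read from T (T^k z), and T orders these points like the
  ranks inv perm (u ! k) of the last letters u ! k of the rotations. Because w has no inner
  occurrence in u w, no shift 0 < r < length u of the periodic word u u u ... agrees with it on
  length w letters, so two distinct rotations already differ inside the part of the orbit known
  to spell u w. Hence the rotations are sorted lexicographically as their last letters are
  sorted by inv perm, which is perm-clustering.\<close>

section \<open>Rotations and the Burrows-Wheeler transform\<close>

lemma list_less_first_difference:
  fixes xs ys :: "'a::linorder list"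
  assumes "take q xs = take q ys" "q < length xs" "q < length ys" "xs ! q < ys ! q"
  shows "xs < ys"
proof -
  have "xs = take q xs @ xs ! q # drop (Suc q) xs" "ys = take q xs @ ys ! q # drop (Suc q) ys"
    using assms(1-3) id_take_nth_drop by metis+
  then show ?thesis
    unfolding list_less_def using assms(4) lexord_append_left_rightI[of "xs ! q" "ys ! q"]
    by (metis case_prodI mem_Collect_eq)
qed

lemma last_rotate_Suc:
  assumes "k < length xs"
  shows "last (rotate (Suc k) xs) = xs ! k"
proof -
  have "last (rotate (Suc k) xs) = rotate (Suc k) xs ! (length xs - 1)"
    using assms by (metis last_conv_nth length_rotate list.size(3) not_less0)
  also have "\<dots> = xs ! ((Suc k + (length xs - 1)) mod length xs)"
    using assms by (intro nth_rotate) simp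
  also have "Suc k + (length xs - 1) = k + length xs"
    using assms by simp
  finally show ?thesis
    using assms by simp
qed

lemma ex_rotate_Suc:
  assumes "xs \<noteq> []"
  shows "\<exists>k<length xs. rotate n xs = rotate (Suc k) xs"
proof -
  define k where "k = (n + length xs - 1) mod length xs"
  have "Suc k mod length xs = n mod length xs"
    using assms by (simp add: k_def mod_Suc_eq)
  then have "rotate n xs = rotate (Suc k) xs"
    by (metis rotate_conv_mod)
  moreover have "k < length xs"
    using assms by (simp add: k_def)
  ultimately show ?thesis
    by blast
qed

lemma mset_rotate [simp]: "mset (rotate n xs) = mset xs"
  by (metis append_take_drop_id mset_append rotate_drop_take union_commute)

lemma map_last_rotate:
  "map (\<lambda>i. last (rotate i xs)) [0..<length xs] = rotate (length xs - 1) xs"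
proof (rule nth_equalityI)
  fix i
  assume "i < length (map (\<lambda>i. last (rotate i xs)) [0..<length xs])"
  then have i: "i < length xs"
    by simp
  then have "last (rotate i xs) = rotate i xs ! (length xs - 1)"
    by (metis last_conv_nth length_rotate list.size(3) not_less0)
  also have "\<dots> = xs ! ((i + (length xs - 1)) mod length xs)"
    using i by (simp add: nth_rotate)
  also have "\<dots> = rotate (length xs - 1) xs ! i"
    using i by (simp add: nth_rotate add.commute)
  finally show "map (\<lambda>i. last (rotate i xs)) [0..<length xs] ! i = rotate (length xs - 1) xs ! i"
    using i by simp
qed simp

lemma mset_bwt: "mset (bwt v) = mset v"
proof -
  have "mset (bwt v) = mset (map last (map (\<lambda>i. rotate i v) [0..<length v]))"
    unfolding bwt_def by (simp only: mset_map mset_sort)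
  also have "\<dots> = mset (map (\<lambda>i. last (rotate i v)) [0..<length v])"
    by (simp add: comp_def)
  finally show ?thesis
    by (simp only: map_last_rotate mset_rotate)
qed

lemma mset_concat_replicate_count_list:
  assumes "distinct bs" "set v \<subseteq> set bs"
  shows "mset (concat (map (\<lambda>b. replicate (count_list v b) b) bs)) = mset v"
proof (rule multiset_eqI)
  fix x
  have "count (mset (concat (map (\<lambda>b. replicate (count_list v b) b) bs))) x
      = (\<Sum>b\<leftarrow>bs. if b = x then count_list v x else 0)"
    by (induction bs) (auto simp: count_mset)
  also have "\<dots> = count (mset v) x"
    using assms by (auto simp: sum_list_distinct_conv_sum_set count_mset count_list_0_iff)
  finally show "count (mset (concat (map (\<lambda>b. replicate (count_list v b) b) bs))) x = count (mset v) x" .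
qed

lemma sorted_concat_replicate:
  "sorted xs \<Longrightarrow> sorted (concat (map (\<lambda>a. replicate (f a) a) xs))"
  by (induction xs) (auto simp: sorted_append)

lemma sorted_map_inj_unique:
  assumes "inj f" "mset xs = mset ys" "sorted (map f xs)" "sorted (map f ys)"
  shows "xs = ys"
proof -
  have "sort (map f ys) = map f xs"
    using assms(2,3) by (intro properties_for_sort) (simp add: mset_map)
  then show ?thesis
    using assms(1,4) by (simp add: sorted_sort_id)
qed

lemma sorted_map_bwt_if_rotations_ordered_by_last:
  fixes v :: "'a::linorder list" and rk :: "'a \<Rightarrow> 'b::linorder"
  assumes rotation_less: "\<And>k k'. k < length v \<Longrightarrow> k' < length v \<Longrightarrow>
      rk (v ! k') < rk (v ! k) \<Longrightarrow> rotate (Suc k') v < rotate (Suc k) v"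
  shows "sorted (map rk (bwt v))"
proof -
  have "sorted_wrt (\<lambda>x y. rk (last x) \<le> rk (last y)) (sort (map (\<lambda>i. rotate i v) [0..<length v]))"
  proof (rule sorted_wrt_mono_rel[OF _ sorted_sort])
    fix x y
    assume "x \<in> set (sort (map (\<lambda>i. rotate i v) [0..<length v]))" "x \<le> y"
      and "y \<in> set (sort (map (\<lambda>i. rotate i v) [0..<length v]))"
    then obtain i i' where "i < length v" "x = rotate i v" "y = rotate i' v"
      by auto
    moreover have "v \<noteq> []"
      using \<open>i < length v\<close> by auto
    ultimately obtain k k' where
      "k < length v" "x = rotate (Suc k) v" "k' < length v" "y = rotate (Suc k') v"
      using ex_rotate_Suc by metis
    moreover have "last x = v ! k" "last y = v ! k'"
      using calculation by (simp_all add: last_rotate_Suc del: rotate_Suc)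
    ultimately show "rk (last x) \<le> rk (last y)"
      using rotation_less[of k k'] \<open>x \<le> y\<close> by (metis leD not_le)
  qed
  then show ?thesis
    by (simp add: bwt_def sorted_wrt_map)
qed

lemma pi_clustering_if_rotations_ordered_by_last:
  fixes v :: "'a::{linorder,finite} list"
  assumes "bij perm"
    and "\<And>k k'. k < length v \<Longrightarrow> k' < length v \<Longrightarrow>
      inv perm (v ! k') < inv perm (v ! k) \<Longrightarrow> rotate (Suc k') v < rotate (Suc k) v"
  shows "pi_clustering perm v"
proof -
  define letters where "letters = sorted_list_of_set (UNIV :: 'a set)"
  define clustered where
    "clustered = concat (map (\<lambda>a. replicate (count_list v (perm a)) (perm a)) letters)"
  have inj: "inj perm" "inj (inv perm)"
    using \<open>bij perm\<close> bij_betw_inv_into bij_is_inj by blast+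
  have "map (inv perm) clustered = concat (map (\<lambda>a. replicate (count_list v (perm a)) a) letters)"
    using inj by (simp add: clustered_def map_concat comp_def)
  then have "sorted (map (inv perm) clustered)"
    by (simp add: letters_def sorted_concat_replicate)
  moreover have "mset clustered = mset v"
  proof -
    have "clustered = concat (map (\<lambda>b. replicate (count_list v b) b) (map perm letters))"
      by (simp add: clustered_def comp_def)
    moreover have "distinct (map perm letters)" "set (map perm letters) = UNIV"
      using \<open>bij perm\<close> by (simp_all add: letters_def distinct_map inj bij_is_surj)
    ultimately show ?thesis
      using mset_concat_replicate_count_list by (metis subset_UNIV)
  qed
  ultimately have "bwt v = clustered"
    using inj assms(2) sorted_map_bwt_if_rotations_ordered_by_last[of v "inv perm"]
    by (intro sorted_map_inj_unique[of "inv perm"]) (simp_all add: mset_bwt)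
  then show ?thesis
    by (simp add: pi_clustering_def clustered_def letters_def)
qed


section \<open>Return words\<close>

lemma nth_append_overlap:
  assumes "u @ w = w @ s" "u \<noteq> []" "n < length u + length w"
  shows "(u @ w) ! n = u ! (n mod length u)"
  using assms(3)
proof (induction n rule: less_induct)
  case (less n)
  show ?case
  proof (cases "n < length u")
    case True
    then show ?thesis
      by (simp add: nth_append)
  next
    case False
    have "0 < length u"
      using assms(2) by simp
    then have shorter: "n - length u < n"
      using False by linarith
    have "n - length u < length w"
      using less.prems False by linarith
    then have "(u @ w) ! n = (w @ s) ! (n - length u)"
      using False by (simp add: nth_append)
    also have "\<dots> = u ! ((n - length u) mod length u)"
      using less.IH[OF shorter] less.prems assms(1) by simp
    also have "(n - length u) mod length u = n mod length u"
      using False by (simp add: le_mod_geq)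
    finally show ?thesis .
  qed
qed

lemma append_overlap_shift_mismatch:
  assumes uw: "u @ w = w @ s"
    and no_inner: "\<not> (\<exists>p s. p \<noteq> [] \<and> s \<noteq> [] \<and> u @ w = p @ w @ s)"
    and r: "0 < r" "r < length u"
  shows "\<exists>i<length w. u ! ((r + i) mod length u) \<noteq> u ! (i mod length u)"
proof (rule ccontr)
  assume no_mismatch: "\<not> ?thesis"
  define z where "z = u @ w"
  have "u \<noteq> []"
    using r by auto
  have len_z: "length z = length u + length w"
    by (simp add: z_def)
  have "take (length w) (drop r z) = w"
  proof (rule nth_equalityI)
    fix i
    assume "i < length (take (length w) (drop r z))"
    then have i: "i < length w"
      by simp
    have "z ! (r + i) = u ! ((r + i) mod length u)"
      using nth_append_overlap[OF uw \<open>u \<noteq> []\<close>] i r by (simp add: z_def)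
    also have "\<dots> = u ! (i mod length u)"
      using no_mismatch i by blast
    also have "\<dots> = w ! i"
      using nth_append_overlap[OF uw \<open>u \<noteq> []\<close>, of i] i uw by (simp add: nth_append)
    finally show "take (length w) (drop r z) ! i = w ! i"
      using i r len_z by simp
  qed (use r len_z in simp)
  then have "z = take r z @ w @ drop (r + length w) z"
    by (metis append.assoc append_take_drop_id take_add)
  moreover have "take r z \<noteq> []" "drop (r + length w) z \<noteq> []"
    using r len_z by (auto simp: take_eq_Nil)
  ultimately show False
    using no_inner z_def by blast
qed

lemma append_overlap_rotations_differ:
  assumes uw: "u @ w = w @ s"
    and no_inner: "\<not> (\<exists>p s. p \<noteq> [] \<and> s \<noteq> [] \<and> u @ w = p @ w @ s)"
    and j: "0 < j" "j \<le> length u" and j': "0 < j'" "j' \<le> length u" and "j \<noteq> j'"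
  shows "\<exists>t < length u - j + length w. u ! ((j + t) mod length u) \<noteq> u ! ((j' + t) mod length u)"
proof -
  define m where "m = length u"
  define r where "r = (if j < j' then j' - j else j' + m - j)"
  have "0 < r" "r < m"
    using j j' \<open>j \<noteq> j'\<close> by (auto simp: r_def m_def)
  then obtain i where i: "i < length w" "u ! ((r + i) mod m) \<noteq> u ! (i mod m)"
    using append_overlap_shift_mismatch[OF uw no_inner] by (auto simp: m_def)
  have "(j + (m - j + i)) mod m = i mod m"
    using j by (simp add: m_def)
  moreover have "(j' + (m - j + i)) mod m = (r + i) mod m"
  proof (cases "j < j'")
    case True
    then have shift: "j' + (m - j + i) = (r + i) + m"
      using j by (simp add: r_def m_def)
    show ?thesis
      unfolding shift by (rule mod_add_self2)
  next
    case False
    then have "r = j' + m - j"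
      by (simp add: r_def)
    then have shift: "j' + (m - j + i) = r + i"
      using j by (simp add: m_def)
    show ?thesis
      unfolding shift ..
  qed
  ultimately show ?thesis
    using i j by (intro exI[of _ "m - j + i"]) (auto simp: m_def)
qed

lemma append_overlap_first_rotation_difference:
  assumes uw: "u @ w = w @ s"
    and no_inner: "\<not> (\<exists>p s. p \<noteq> [] \<and> s \<noteq> [] \<and> u @ w = p @ w @ s)"
    and k: "k < length u" "k' < length u" and "u ! k \<noteq> u ! k'"
  obtains q where "q < length u" "Suc k + q < length u + length w" "Suc k' + q < length u + length w"
    and "\<And>t. t < q \<Longrightarrow> u ! ((Suc k + t) mod length u) = u ! ((Suc k' + t) mod length u)"
    and "u ! ((Suc k + q) mod length u) \<noteq> u ! ((Suc k' + q) mod length u)"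
proof -
  define m where "m = length u"
  define differs where
    "differs t \<longleftrightarrow> u ! ((Suc k + t) mod m) \<noteq> u ! ((Suc k' + t) mod m)" for t
  have "k \<noteq> k'"
    using \<open>u ! k \<noteq> u ! k'\<close> by auto
  obtain t1 where t1: "t1 < m - Suc k + length w" "differs t1"
    using append_overlap_rotations_differ[OF uw no_inner, of "Suc k" "Suc k'"] k \<open>k \<noteq> k'\<close>
    by (auto simp: differs_def m_def)
  obtain t2 where t2: "t2 < m - Suc k' + length w"
    and "u ! ((Suc k' + t2) mod m) \<noteq> u ! ((Suc k + t2) mod m)"
    using append_overlap_rotations_differ[OF uw no_inner, of "Suc k'" "Suc k"] k \<open>k \<noteq> k'\<close>
    by (auto simp: m_def)
  then have "differs t2"
    unfolding differs_def by metis
  have last_differs: "differs (m - 1)"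
  proof -
    have "Suc k + (m - 1) = k + m" "Suc k' + (m - 1) = k' + m"
      using k by (simp_all add: m_def)
    then show ?thesis
      unfolding differs_def using k \<open>u ! k \<noteq> u ! k'\<close> by (simp add: m_def)
  qed
  define q where "q = (LEAST t. differs t)"
  have "differs q" "q \<le> t1" "q \<le> t2" "q \<le> m - 1" and before_q: "\<And>t. t < q \<Longrightarrow> \<not> differs t"
    using t1 \<open>differs t2\<close> last_differs LeastI[of differs] Least_le[of differs] not_less_Least[of _ differs]
    unfolding q_def by blast+
  moreover have "q < m"
    using \<open>q \<le> m - 1\<close> k by (simp add: m_def)
  ultimately show ?thesis
    using t1 t2 k by (intro that[of q]) (auto simp: differs_def m_def)
qed

lemma rotate_less_if_first_difference:
  fixes u :: "'a::linorder list"
  assumes "q < length u"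
    and "\<And>t. t < q \<Longrightarrow> u ! ((j + t) mod length u) = u ! ((j' + t) mod length u)"
    and "u ! ((j' + q) mod length u) < u ! ((j + q) mod length u)"
  shows "rotate j' u < rotate j u"
proof (rule list_less_first_difference)
  show "take q (rotate j' u) = take q (rotate j u)"
    using assms(1,2) by (intro nth_equalityI) (simp_all add: nth_rotate)
qed (use assms(1,3) in \<open>simp_all add: nth_rotate\<close>)


section \<open>Interval exchange transformations\<close>

lemma sum_rank_less_add_le:
  fixes lam :: "'a::finite \<Rightarrow> real" and r :: "'a \<Rightarrow> 'b::linorder"
  assumes "\<And>c. 0 \<le> lam c" and "insert a {c. r c < r a} \<subseteq> B"
  shows "(\<Sum>c | r c < r a. lam c) + lam a \<le> sum lam B"
proof -
  have "(\<Sum>c | r c < r a. lam c) + lam a = sum lam (insert a {c. r c < r a})"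
    by (simp add: sum.insert)
  also have "\<dots> \<le> sum lam B"
    using assms by (intro sum_mono2) auto
  finally show ?thesis .
qed

lemma iet_left_add_length:
  "iet_left l lam a + lam a = l + (\<Sum>c | c \<le> a. lam c)"
proof -
  have "{c. c \<le> a} = insert a {c. c < a}"
    by auto
  then show ?thesis
    by (simp add: iet_left_def sum.insert)
qed

locale interval_exchange =
  fixes l :: real and lam :: "'a::{linorder,finite} \<Rightarrow> real" and perm :: "'a \<Rightarrow> 'a"
  assumes lam_pos: "\<And>a. lam a > 0"
begin

abbreviation "D \<equiv> iet_domain l lam"
abbreviation "I \<equiv> iet_interval l lam"
abbreviation "letter \<equiv> iet_letter l lam"
abbreviation "T \<equiv> iet_map l lam perm"
abbreviation "traj \<equiv> iet_traj l lam perm"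

lemma lam_nonneg: "0 \<le> lam a"
  using lam_pos less_imp_le by blast

lemma iet_left_add_le:
  assumes "a < b"
  shows "iet_left l lam a + lam a \<le> iet_left l lam b"
proof -
  have "insert a {c. c < a} \<subseteq> {c. c < b}"
    using assms by auto
  then show ?thesis
    using sum_rank_less_add_le[of lam a "\<lambda>c. c"] lam_nonneg by (simp add: iet_left_def)
qed

lemma ex_iet_interval:
  assumes "x \<in> D"
  shows "\<exists>a. x \<in> I a"
proof -
  define S where "S = {a. x < iet_left l lam a + lam a}"
  have "Max UNIV \<in> S"
    using assms by (simp add: S_def iet_left_add_length iet_domain_def)
  define a where "a = Min S"
  have "a \<in> S"
    unfolding a_def using \<open>Max UNIV \<in> S\<close> by (intro Min_in) auto
  moreover have "iet_left l lam a \<le> x"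
  proof (cases "{c. c < a} = {}")
    case True
    then show ?thesis
      using assms by (simp add: iet_left_def iet_domain_def)
  next
    case False
    define p where "p = Max {c. c < a}"
    have "p < a"
      using False Max_in[of "{c. c < a}"] by (simp add: p_def)
    then have "p \<notin> S"
      unfolding a_def by (meson Min_le finite leD)
    have "{c. c < a} = {c. c \<le> p}"
      using \<open>p < a\<close> by (auto simp: p_def)
    then have "iet_left l lam a = l + (\<Sum>c | c \<le> p. lam c)"
      by (simp add: iet_left_def)
    also have "\<dots> = iet_left l lam p + lam p"
      by (simp only: iet_left_add_length)
    finally show ?thesis
      using \<open>p \<notin> S\<close> by (simp add: S_def)
  qed
  ultimately show ?thesis
    by (auto simp: S_def iet_interval_def)
qed

lemma iet_interval_unique:
  assumes "x \<in> I a" "x \<in> I b"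
  shows "a = b"
  using assms iet_left_add_le[of a b] iet_left_add_le[of b a]
  by (cases a b rule: linorder_cases) (auto simp: iet_interval_def)

lemma in_iet_interval_letter: "x \<in> D \<Longrightarrow> x \<in> I (letter x)"
  unfolding iet_letter_def using ex_iet_interval iet_interval_unique by (metis theI)

lemma letter_mono:
  assumes "x \<in> D" "y \<in> D" "x < y"
  shows "letter x \<le> letter y"
proof (rule ccontr)
  assume "\<not> letter x \<le> letter y"
  then have "iet_left l lam (letter y) + lam (letter y) \<le> iet_left l lam (letter x)"
    by (intro iet_left_add_le) simp
  then show False
    using assms in_iet_interval_letter[of x] in_iet_interval_letter[of y]
    by (auto simp: iet_interval_def)
qed

lemma iet_map_bounds:
  assumes "x \<in> D"
  shows "l + (\<Sum>b | inv perm b < inv perm (letter x). lam b) \<le> T x"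
    and "T x < l + (\<Sum>b | inv perm b < inv perm (letter x). lam b) + lam (letter x)"
  using in_iet_interval_letter[OF assms]
  by (auto simp: iet_map_def iet_tau_def iet_interval_def iet_left_def)

lemma iet_map_in_domain:
  assumes "x \<in> D"
  shows "T x \<in> D"
proof -
  have "0 \<le> (\<Sum>b | inv perm b < inv perm (letter x). lam b)"
    using lam_nonneg by (simp add: sum_nonneg)
  moreover have "(\<Sum>b | inv perm b < inv perm (letter x). lam b) + lam (letter x) \<le> sum lam UNIV"
    using lam_nonneg by (intro sum_rank_less_add_le) auto
  ultimately show ?thesis
    using iet_map_bounds[OF assms] by (simp add: iet_domain_def)
qed

lemma funpow_iet_map_in_domain: "x \<in> D \<Longrightarrow> (T ^^ n) x \<in> D"
  by (induction n) (auto intro: iet_map_in_domain)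

lemma iet_map_less_if_rank_less:
  assumes "x \<in> D" "y \<in> D" "inv perm (letter y) < inv perm (letter x)"
  shows "T y < T x"
proof -
  have "(\<Sum>b | inv perm b < inv perm (letter y). lam b) + lam (letter y)
      \<le> (\<Sum>b | inv perm b < inv perm (letter x). lam b)"
    using lam_nonneg assms(3) by (intro sum_rank_less_add_le) auto
  then show ?thesis
    using iet_map_bounds[OF assms(1)] iet_map_bounds[OF assms(2)] by linarith
qed

lemma iet_traj_funpow: "traj ((T ^^ n) x) t = traj x (n + t)"
  unfolding iet_traj_def by (metis add.commute comp_apply funpow_add)

lemma funpow_iet_map_diff:
  assumes "\<And>t. t < q \<Longrightarrow> traj x t = traj y t"
  shows "(T ^^ q) x - (T ^^ q) y = x - y"
  using assms
proof (induction q)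
  case (Suc q)
  have "letter ((T ^^ q) x) = letter ((T ^^ q) y)"
    using Suc.prems[of q] by (simp add: iet_traj_def)
  then show ?case
    using Suc by (simp add: iet_map_def[of l lam perm "(T ^^ q) x"] iet_map_def[of l lam perm "(T ^^ q) y"])
qed simp

lemma iet_traj_less_at_first_difference:
  assumes "x \<in> D" "y \<in> D" "y < x"
    and "\<And>t. t < q \<Longrightarrow> traj x t = traj y t" and "traj x q \<noteq> traj y q"
  shows "traj y q < traj x q"
proof -
  have "(T ^^ q) x - (T ^^ q) y = x - y"
    using assms(4) by (rule funpow_iet_map_diff)
  then have "(T ^^ q) y < (T ^^ q) x"
    using assms(3) by linarith
  then have "letter ((T ^^ q) y) \<le> letter ((T ^^ q) x)"
    using assms(1,2) by (intro letter_mono funpow_iet_map_in_domain)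
  then show ?thesis
    using assms(5) by (simp add: iet_traj_def)
qed

lemma return_word_trajectory:
  assumes "u @ w \<in> iet_language l lam perm" "u @ w = w @ s" "u \<noteq> []"
  obtains z where "z \<in> D" "\<And>n. n < length u + length w \<Longrightarrow> traj z n = u ! (n mod length u)"
proof -
  obtain x i where "x \<in> D" and x: "u @ w = map (traj x) [i..<i + length (u @ w)]"
    using assms(1) unfolding iet_language_def by blast
  have "traj ((T ^^ i) x) n = u ! (n mod length u)" if "n < length u + length w" for n
  proof -
    have "traj ((T ^^ i) x) n = (u @ w) ! n"
      using that by (subst x) (simp add: iet_traj_funpow)
    also have "\<dots> = u ! (n mod length u)"
      using that assms(2,3) by (rule nth_append_overlap[rotated 2])
    finally show ?thesis .
  qed
  then show ?thesis
    using \<open>x \<in> D\<close> funpow_iet_map_in_domain that by blast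
qed

lemma rotation_less_if_rank_less:
  assumes z: "z \<in> D"
    and realizes: "\<And>n. n < length u + length w \<Longrightarrow> traj z n = u ! (n mod length u)"
    and uw: "u @ w = w @ s"
    and no_inner: "\<not> (\<exists>p s. p \<noteq> [] \<and> s \<noteq> [] \<and> u @ w = p @ w @ s)"
    and k: "k < length u" "k' < length u"
    and rank: "inv perm (u ! k') < inv perm (u ! k)"
  shows "rotate (Suc k') u < rotate (Suc k) u"
proof -
  have "u ! k \<noteq> u ! k'"
    using rank by auto
  then obtain q where "q < length u"
    and q_bounds: "Suc k + q < length u + length w" "Suc k' + q < length u + length w"
    and before_q: "\<And>t. t < q \<Longrightarrow> u ! ((Suc k + t) mod length u) = u ! ((Suc k' + t) mod length u)"
    and at_q: "u ! ((Suc k + q) mod length u) \<noteq> u ! ((Suc k' + q) mod length u)"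
    using append_overlap_first_rotation_difference[OF uw no_inner k] by blast
  define x y where "x = (T ^^ Suc k) z" and "y = (T ^^ Suc k') z"
  have "x \<in> D" "y \<in> D"
    using z by (simp_all only: x_def y_def funpow_iet_map_in_domain)
  have traj_x: "traj x t = u ! ((Suc k + t) mod length u)" if "t \<le> q" for t
    using that q_bounds unfolding x_def iet_traj_funpow by (intro realizes) linarith
  have traj_y: "traj y t = u ! ((Suc k' + t) mod length u)" if "t \<le> q" for t
    using that q_bounds unfolding y_def iet_traj_funpow by (intro realizes) linarith
  have "letter ((T ^^ k') z) = u ! k'" "letter ((T ^^ k) z) = u ! k"
    using realizes[of k] realizes[of k'] k by (simp_all add: iet_traj_def)
  then have "y < x"
    using z rank by (simp add: x_def y_def iet_map_less_if_rank_less funpow_iet_map_in_domain)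
  then have "traj y q < traj x q"
    using \<open>x \<in> D\<close> \<open>y \<in> D\<close> before_q at_q
    by (intro iet_traj_less_at_first_difference) (auto simp: traj_x traj_y)
  then show ?thesis
    using \<open>q < length u\<close> before_q
    by (intro rotate_less_if_first_difference) (auto simp: traj_x traj_y)
qed

end

theorem theorem6p1:
  fixes l :: real and lam :: "'a::{linorder,finite} \<Rightarrow> real" and perm :: "'a \<Rightarrow> 'a"
  assumes "\<And>a. lam a > 0"
    and "bij perm"
    and "w \<in> iet_language l lam perm"
    and "u \<in> return_words (iet_language l lam perm) w"
  shows "pi_clustering perm u"
proof -
  interpret interval_exchange l lam perm
    using assms(1) by unfold_locales
  obtain s where uw_in_language: "u @ w \<in> iet_language l lam perm" and uw: "u @ w = w @ s"
    and no_inner: "\<not> (\<exists>p s. p \<noteq> [] \<and> s \<noteq> [] \<and> u @ w = p @ w @ s)"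
    using assms(4) unfolding return_words_def by blast
  show ?thesis
  proof (cases "u = []")
    case True
    then show ?thesis
      by (simp add: pi_clustering_def bwt_def)
  next
    case False
    then obtain z where "z \<in> D"
      and "\<And>n. n < length u + length w \<Longrightarrow> traj z n = u ! (n mod length u)"
      using return_word_trajectory[OF uw_in_language uw] by blast
    then show ?thesis
      using assms(2) rotation_less_if_rank_less[OF _ _ uw no_inner]
      by (intro pi_clustering_if_rotations_ordered_by_last) auto
  qed
qed

end
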